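(* Let $(X,d,\mu)$ be an almost-manifold metric measure space of dimension $m$ satisfying (LPI), with unbounded regular part $\mathcal R$. Fix $o\in\mathcal R$ and an integer $i\ge1$, and let $\mathcal S_i=\mathcal S\cap\overline{B_i(o)}$. If $\dim_{\mathcal H}(\mathcal S)<\frac{m-2}{2}$, then there exists a finite Radon measure $\nu$ supported on $\mathcal S_i$ such that $\mathcal W^\nu(x)=+\infty$ for every $x\in\mathcal S_i$, where $$\mathcal W^\nu(x):=\int_0^1\big(\nu(B_r(x))\,r^{2-m}\big)^{\frac{2}{m-2}}\,dr.$$
   Context: A metric measure space $(X,d,\mu)$: $(X,d)$ is a complete metric space and $\mu$ is a Borel regular measure with $\mu(B_r(x))<\infty$. It is almost-manifold (of dimension $m$) if there is an integer $m\ge3$ such that (i) for every bounded $U\subset X$ there are $\varepsilon,C>0$ with $C^{-1}r^m\le\mu(B_r(x))\le Cr^m$ for $x\in U$, $r\in(0,\varepsilon)$; (ii) $X=\mathcal R\sqcup\mathcal S$ where $\mathcal R$ is a connected smooth $m$-manifold with a Riemannian metric $g$ such that $d_L=d_g$ and $\mu=\mu_g$ on $\mathcal R$ ($d_L$ the length metric associated to $d$), and $\mathcal S$ is closed with $\mathcal H^{m-2}(\mathcal S)=0$. For open $\Omega\subset X$, $W^{1,2}_0(\Omega)$ is the completion of $C^\infty_0(\mathcal R\cap\Omega)$ in the norm $(\int_{\mathcal R}|\phi|^2+|\nabla_g\phi|^2\,d\mu)^{1/2}$. (LPI): for every bounded $U\subset X$ there are $\varepsilon>0$, $\lambda\ge1$,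 $C_P>0$ with $\fint_B|\phi-\phi_B|\,d\mu\le C_Pr(\fint_{\mathcal R\cap\lambda B}|\nabla_g\phi|^2\,d\mu)^{1/2}$ for all $\phi\in W^{1,2}_0(X)$, $B=B_r(x)$, $x\in U$, $r\in(0,\varepsilon)$. Hausdorff dimension is with respect to $d$. *)

theory Defs
  imports "HOL-Analysis.Analysis"
begin

coinductive C_inf :: "(real^'n) set \<Rightarrow> (real^'n \<Rightarrow> real) \<Rightarrow> bool" where
  "\<lbrakk>\<forall>x\<in>S. f differentiable (at x);
    \<forall>i. C_inf S (\<lambda>x. frechet_derivative f (at x) (axis i 1))\<rbrakk> \<Longrightarrow> C_inf S f"

definition smooth_map :: "(real^'n) set \<Rightarrow> (real^'n \<Rightarrow> real^'k) \<Rightarrow> bool" where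
  "smooth_map S F \<longleftrightarrow> (\<forall>j. C_inf S (\<lambda>x. F x $ j))"

type_synonym ('a,'n) chart = "'a set \<times> ('a \<Rightarrow> real^'n)"

definition is_chart :: "'a::topological_space set \<Rightarrow> ('a,'n::finite) chart \<Rightarrow> bool" where
  "is_chart R c \<longleftrightarrow> fst c \<subseteq> R \<and> open (fst c) \<and> open (snd c ` fst c) \<and>
     inj_on (snd c) (fst c) \<and> continuous_on (fst c) (snd c) \<and>
     continuous_on (snd c ` fst c) (inv_into (fst c) (snd c))"

definition chart_inv :: "('a,'n) chart \<Rightarrow> real^'n \<Rightarrow> 'a" where
  "chart_inv c = inv_into (fst c) (snd c)"

definition transition :: "('a,'n) chart \<Rightarrow> ('a,'n) chart \<Rightarrow> real^'n \<Rightarrow> real^'n" where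
  "transition c c' = snd c' \<circ> chart_inv c"

definition smooth_atlas :: "'a::topological_space set \<Rightarrow> ('a,'n::finite) chart set \<Rightarrow> bool" where
  "smooth_atlas R A \<longleftrightarrow> (\<forall>c\<in>A. is_chart R c) \<and> \<Union>(fst ` A) = R \<and>
     (\<forall>c\<in>A. \<forall>c'\<in>A. smooth_map (snd c ` (fst c \<inter> fst c')) (transition c c'))"

text \<open>A Riemannian metric is given by its coefficient matrices in each chart,
  smooth, symmetric, positive definite and compatible under chart changes.\<close>
definition riemannian_metric ::
  "'a::topological_space set \<Rightarrow> ('a,'n::finite) chart set \<Rightarrow> (('a,'n) chart \<Rightarrow> real^'n \<Rightarrow> real^'n^'n) \<Rightarrow> bool" where
  "riemannian_metric R A g \<longleftrightarrow> smooth_atlas R A \<and>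
     (\<forall>c\<in>A. (\<forall>i j. C_inf (snd c ` fst c) (\<lambda>y. g c y $ i $ j)) \<and>
        (\<forall>y\<in>snd c ` fst c. transpose (g c y) = g c y \<and> (\<forall>v. v \<noteq> 0 \<longrightarrow> v \<bullet> (g c y *v v) > 0))) \<and>
     (\<forall>c\<in>A. \<forall>c'\<in>A. \<forall>y\<in>snd c ` (fst c \<inter> fst c').
        g c y = transpose (matrix (frechet_derivative (transition c c') (at y)))
                ** g c' (transition c c' y) ** matrix (frechet_derivative (transition c c') (at y)))"

definition chart_at :: "('a,'n) chart set \<Rightarrow> 'a \<Rightarrow> ('a,'n) chart" where
  "chart_at A p = (SOME c. c \<in> A \<and> p \<in> fst c)"

definition smooth_curve :: "'a::topological_space set \<Rightarrow> ('a,'n::finite) chart set \<Rightarrow> (real \<Rightarrow> 'a) \<Rightarrow> bool" where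
  "smooth_curve R A \<gamma> \<longleftrightarrow> path \<gamma> \<and> \<gamma> ` {0..1} \<subseteq> R \<and>
     (\<forall>c\<in>A. \<exists>D. (\<forall>t\<in>{t\<in>{0..1}. \<gamma> t \<in> fst c}.
          ((snd c \<circ> \<gamma>) has_vector_derivative D t) (at t within {0..1})) \<and>
        continuous_on {t\<in>{0..1}. \<gamma> t \<in> fst c} D)"

definition speed :: "('a,'n::finite) chart set \<Rightarrow> (('a,'n) chart \<Rightarrow> real^'n \<Rightarrow> real^'n^'n) \<Rightarrow> (real \<Rightarrow> 'a) \<Rightarrow> real \<Rightarrow> real" where
  "speed A g \<gamma> t = (let c = chart_at A (\<gamma> t);
       v = vector_derivative (snd c \<circ> \<gamma>) (at t within {0..1})
     in sqrt (v \<bullet> (g c (snd c (\<gamma> t)) *v v)))"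

definition riem_dist :: "'a::topological_space set \<Rightarrow> ('a,'n::finite) chart set \<Rightarrow> (('a,'n) chart \<Rightarrow> real^'n \<Rightarrow> real^'n^'n) \<Rightarrow> 'a \<Rightarrow> 'a \<Rightarrow> ennreal" where
  "riem_dist R A g x y = (INF \<gamma>\<in>{\<gamma>. smooth_curve R A \<gamma> \<and> pathstart \<gamma> = x \<and> pathfinish \<gamma> = y}.
      \<integral>\<^sup>+ t\<in>{0..1}. ennreal (speed A g \<gamma> t) \<partial>lborel)"

definition curve_length :: "(real \<Rightarrow> 'a::metric_space) \<Rightarrow> ennreal" where
  "curve_length \<gamma> = (SUP p\<in>{(n, t::nat \<Rightarrow> real). (\<forall>k\<le>n. 0 \<le> t k \<and> t k \<le> 1) \<and> (\<forall>k<n. t k \<le> t (Suc k))}.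
      ennreal (\<Sum>k<fst p. dist (\<gamma> (snd p k)) (\<gamma> (snd p (Suc k)))))"

definition length_dist :: "'a::metric_space \<Rightarrow> 'a \<Rightarrow> ennreal" where
  "length_dist x y = (INF \<gamma>\<in>{\<gamma>. path \<gamma> \<and> pathstart \<gamma> = x \<and> pathfinish \<gamma> = y}. curve_length \<gamma>)"

section \<open>Hausdorff measure and dimension (up to normalisation constant)\<close>

definition hausdorff_pre :: "real \<Rightarrow> real \<Rightarrow> 'a::metric_space set \<Rightarrow> ennreal" where
  "hausdorff_pre s \<delta> E = (INF C\<in>{C::nat \<Rightarrow> 'a set. E \<subseteq> \<Union>(range C) \<and> (\<forall>k. bounded (C k) \<and> diameter (C k) \<le> \<delta>)}.
      (\<Sum>k. ennreal (diameter (C k) powr s)))"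

definition hausdorff_measure :: "real \<Rightarrow> 'a::metric_space set \<Rightarrow> ennreal" where
  "hausdorff_measure s E = (SUP \<delta>\<in>{0<..}. hausdorff_pre s \<delta> E)"

definition hausdorff_dim :: "'a::metric_space set \<Rightarrow> ereal" where
  "hausdorff_dim E = Inf (ereal ` {s. 0 \<le> s \<and> hausdorff_measure s E = 0})"

definition test_function :: "'a::topological_space set \<Rightarrow> ('a,'n::finite) chart set \<Rightarrow> 'a set \<Rightarrow> ('a \<Rightarrow> real) \<Rightarrow> bool" where
  "test_function R A \<Omega> \<phi> \<longleftrightarrow> (\<exists>K. compact K \<and> K \<subseteq> R \<inter> \<Omega> \<and> (\<forall>p. p \<notin> K \<longrightarrow> \<phi> p = 0)) \<and>
     (\<forall>c\<in>A. C_inf (snd c ` fst c) (\<phi> \<circ> chart_inv c))"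

definition grad_norm_sq :: "('a,'n::finite) chart set \<Rightarrow> (('a,'n) chart \<Rightarrow> real^'n \<Rightarrow> real^'n^'n) \<Rightarrow> ('a \<Rightarrow> real) \<Rightarrow> 'a \<Rightarrow> real" where
  "grad_norm_sq A g \<phi> p = (let c = chart_at A p; y = snd c p;
       D = (\<chi> i. frechet_derivative (\<phi> \<circ> chart_inv c) (at y) (axis i 1))
     in D \<bullet> (matrix_inv (g c y) *v D))"

definition vol_compat :: "'a::topological_space measure \<Rightarrow> ('a,'n::finite) chart set \<Rightarrow> (('a,'n) chart \<Rightarrow> real^'n \<Rightarrow> real^'n^'n) \<Rightarrow> bool" where
  "vol_compat \<mu> A g \<longleftrightarrow> (\<forall>c\<in>A. \<forall>B\<in>sets borel. B \<subseteq> fst c \<longrightarrow>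
      emeasure \<mu> B = (\<integral>\<^sup>+ y\<in>snd c ` B. ennreal (sqrt (det (g c y))) \<partial>lborel))"

definition almost_manifold :: "nat \<Rightarrow> 'a::complete_space measure \<Rightarrow> 'a set \<Rightarrow> ('a,'n::finite) chart set
    \<Rightarrow> (('a,'n) chart \<Rightarrow> real^'n \<Rightarrow> real^'n^'n) \<Rightarrow> bool" where
  "almost_manifold m \<mu> S A g \<longleftrightarrow>
     m \<ge> 3 \<and> CARD('n) = m \<and>
     sets \<mu> = sets borel \<and> (\<forall>x r. emeasure \<mu> (ball x r) < \<infinity>) \<and>
     (\<forall>U. bounded U \<longrightarrow> (\<exists>\<epsilon>>0. \<exists>C>0. \<forall>x\<in>U. \<forall>r. 0 < r \<and> r < \<epsilon> \<longrightarrow>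
         r ^ m / C \<le> measure \<mu> (ball x r) \<and> measure \<mu> (ball x r) \<le> C * r ^ m)) \<and>
     closed S \<and> hausdorff_measure (real m - 2) S = 0 \<and>
     connected (UNIV - S) \<and> riemannian_metric (UNIV - S) A g \<and>
     (\<forall>x\<in>UNIV - S. \<forall>y\<in>UNIV - S. length_dist x y = riem_dist (UNIV - S) A g x y) \<and>
     vol_compat \<mu> A g"

definition LPI :: "'a::metric_space measure \<Rightarrow> 'a set \<Rightarrow> ('a,'n::finite) chart set
    \<Rightarrow> (('a,'n) chart \<Rightarrow> real^'n \<Rightarrow> real^'n^'n) \<Rightarrow> bool" where
  "LPI \<mu> S A g \<longleftrightarrow> (\<forall>U. bounded U \<longrightarrow> (\<exists>\<epsilon>>0. \<exists>lam\<ge>1. \<exists>CP>0.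
     \<forall>\<phi>. test_function (UNIV - S) A UNIV \<phi> \<longrightarrow> (\<forall>x\<in>U. \<forall>r. 0 < r \<and> r < \<epsilon> \<longrightarrow>
       (let B = ball x r; avg = (\<integral>y. indicator B y * \<phi> y \<partial>\<mu>) / measure \<mu> B;
            LB = (UNIV - S) \<inter> ball x (lam * r)
        in (\<integral>y. indicator B y * \<bar>\<phi> y - avg\<bar> \<partial>\<mu>) / measure \<mu> B
           \<le> CP * r * sqrt ((\<integral>y. indicator LB y * grad_norm_sq A g \<phi> y \<partial>\<mu>) / measure \<mu> LB)))))"

definition finite_radon :: "'a::topological_space measure \<Rightarrow> bool" where
  "finite_radon \<nu> \<longleftrightarrow> sets \<nu> = sets borel \<and> emeasure \<nu> UNIV < \<infinity> \<and>
     (\<forall>B\<in>sets borel. emeasure \<nu> B = (SUP K\<in>{K. compact K \<and> K \<subseteq> B}. emeasure \<nu> K))"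

definition wolff :: "nat \<Rightarrow> 'a::metric_space measure \<Rightarrow> 'a \<Rightarrow> ennreal" where
  "wolff m \<nu> x = (\<integral>\<^sup>+ r\<in>{0<..1}.
      ennreal ((measure \<nu> (ball x r) * r powr (2 - real m)) powr (2 / (real m - 2))) \<partial>lborel)"

end

theory Submission
  imports Defs
begin

text \<open>
  Since dim_H S < (m-2)/2, the set T = S_i has H^t(T) = 0 for t = (m-2)/2. So for every k it is
  covered by balls B(y_kj, r_kj) centred in T with \<Sum>_j r_kj^t \<le> 2^-k, and
  \<nu> = \<Sum>_{k,j} r_kj^t \<delta>_{y_kj} is a finite measure carried by T. Every x \<in> T lies within distance
  \<rho> = r_kj of an atom of mass \<rho>^t, with \<rho> arbitrarily small as k grows. For \<rho> < r \<le> 2\<rho> the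
  integrand of W^\<nu>(x) is then at least (\<rho>^t (2\<rho>)^(2-m))^(2/(m-2)) = 1/(4\<rho>), so each interval
  (\<rho>, 2\<rho>] contributes at least 1/4, and infinitely many disjoint such intervals make W^\<nu>(x) infinite.
\<close>

lemma hausdorff_pre_mono:
  assumes "E \<subseteq> F"
  shows "hausdorff_pre s \<delta> E \<le> hausdorff_pre s \<delta> F"
  unfolding hausdorff_pre_def using assms by (intro INF_superset_mono) auto

lemma hausdorff_measure_mono:
  assumes "E \<subseteq> F"
  shows "hausdorff_measure s E \<le> hausdorff_measure s F"
  unfolding hausdorff_measure_def using hausdorff_pre_mono[OF assms] by (intro SUP_mono) auto

lemma hausdorff_pre_antimono_radius:
  assumes "\<delta> \<le> \<delta>'"
  shows "hausdorff_pre s \<delta>' E \<le> hausdorff_pre s \<delta> E"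
  unfolding hausdorff_pre_def using assms by (intro INF_superset_mono) (auto intro: order_trans)

lemma hausdorff_pre_le_measure:
  assumes "0 < \<delta>"
  shows "hausdorff_pre s \<delta> E \<le> hausdorff_measure s E"
  unfolding hausdorff_measure_def using assms by (intro SUP_upper) auto

lemma hausdorff_pre_antimono_exponent:
  assumes "\<delta> \<le> 1" "0 \<le> s" "s \<le> t"
  shows "hausdorff_pre t \<delta> E \<le> hausdorff_pre s \<delta> E"
  unfolding hausdorff_pre_def
proof (intro INF_mono bexI)
  fix C :: "nat \<Rightarrow> 'a set"
  assume C: "C \<in> {C. E \<subseteq> \<Union>(range C) \<and> (\<forall>k. bounded (C k) \<and> diameter (C k) \<le> \<delta>)}"
  show "(\<Sum>k. ennreal (diameter (C k) powr t)) \<le> (\<Sum>k. ennreal (diameter (C k) powr s))"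
    using C assms diameter_ge_0 by (intro suminf_le ennreal_leI powr_mono') (auto intro: order_trans)
qed

lemma hausdorff_measure_zero_mono_exponent:
  assumes H: "hausdorff_measure s E = 0" and "0 \<le> s" "s \<le> t"
  shows "hausdorff_measure t E = 0"
proof -
  have "hausdorff_pre t \<delta> E = 0" if "0 < \<delta>" for \<delta>
  proof -
    have "hausdorff_pre t \<delta> E \<le> hausdorff_pre t (min \<delta> 1) E"
      by (rule hausdorff_pre_antimono_radius) simp
    also have "\<dots> \<le> hausdorff_pre s (min \<delta> 1) E"
      using assms by (intro hausdorff_pre_antimono_exponent) auto
    also have "\<dots> \<le> hausdorff_measure s E"
      using that by (intro hausdorff_pre_le_measure) simp
    finally show ?thesis using H by simp
  qed
  then show ?thesis unfolding hausdorff_measure_def by simp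
qed

lemma hausdorff_measure_zero_imp_small_cover:
  assumes "hausdorff_measure t E = 0" "0 < \<epsilon>"
  obtains C where "E \<subseteq> \<Union>(range C)" "\<And>k. bounded (C k)"
    "(\<Sum>k. ennreal (diameter (C k) powr t)) < ennreal \<epsilon>"
proof -
  have "hausdorff_pre t 1 E < ennreal \<epsilon>"
    using hausdorff_pre_le_measure[of 1 t E] assms by simp
  then show thesis
    using that unfolding hausdorff_pre_def INF_less_iff by blast
qed

lemma exists_pos_suminf_ennreal_eq:
  fixes \<epsilon> :: real
  assumes "0 < \<epsilon>"
  obtains g :: "nat \<Rightarrow> real" where "\<And>j. 0 < g j" "(\<Sum>j. ennreal (g j)) = ennreal \<epsilon>"
proof -
  define g where "g j = \<epsilon> * (1/2)^Suc j" for j :: nat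
  have "g sums \<epsilon>"
    unfolding g_def using sums_mult[OF power_half_series, of \<epsilon>] by simp
  moreover have g_pos: "0 < g j" for j
    using assms by (simp add: g_def)
  ultimately have "(\<Sum>j. ennreal (g j)) = ennreal \<epsilon>"
    by (metis less_imp_le sums_summable sums_unique suminf_ennreal2)
  with g_pos that show thesis by blast
qed

lemma powr_max_le_add: "max a b powr t \<le> a powr t + b powr (t :: real)"
  by (cases "a \<le> b") (simp_all add: max_def)

lemma hausdorff_measure_zero_imp_ball_cover:
  fixes T :: "'a::metric_space set"
  assumes H: "hausdorff_measure t T = 0" and t: "0 < t" and "T \<noteq> {}" and \<epsilon>: "0 < \<epsilon>"
  obtains Y R where "\<And>j. Y j \<in> T" "\<And>j. 0 < R j" "(\<Sum>j. ennreal (R j powr t)) \<le> ennreal \<epsilon>"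
    "\<And>x. x \<in> T \<Longrightarrow> \<exists>j. dist x (Y j) \<le> R j"
proof -
  have half: "0 < \<epsilon>/2" using \<epsilon> by simp
  obtain C where cover: "T \<subseteq> \<Union>(range C)" and bounded: "\<And>k. bounded (C k)"
    and sum_diam: "(\<Sum>k. ennreal (diameter (C k) powr t)) < ennreal (\<epsilon>/2)"
    using hausdorff_measure_zero_imp_small_cover[OF H half] by blast
  obtain g where g_pos: "\<And>j. 0 < g j" and sum_g: "(\<Sum>j. ennreal (g j)) = ennreal (\<epsilon>/2)"
    using exists_pos_suminf_ennreal_eq[OF half] by blast
  \<comment> \<open>Covering sets may have diameter 0, but the radii must be positive.\<close>
  define R where "R j = max (diameter (C j)) (g j powr (1/t))" for j
  have R_pos: "0 < R j" for j using g_pos[of j] by (simp add: R_def less_max_iff_disj)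
  have R_powr: "R j powr t \<le> diameter (C j) powr t + g j" for j
    using powr_max_le_add[of "diameter (C j)" "g j powr (1/t)" t] g_pos[of j] t
    by (simp add: R_def powr_powr)
  have "(\<Sum>j. ennreal (R j powr t)) \<le> (\<Sum>j. ennreal (diameter (C j) powr t) + ennreal (g j))"
    using R_powr g_pos
    by (intro suminf_le) (auto simp: less_imp_le simp flip: ennreal_plus intro!: ennreal_leI)
  also have "\<dots> = (\<Sum>j. ennreal (diameter (C j) powr t)) + ennreal (\<epsilon>/2)"
    unfolding sum_g[symmetric] by (rule suminf_add[symmetric]) (rule summableI)+
  also have "\<dots> \<le> ennreal (\<epsilon>/2) + ennreal (\<epsilon>/2)"
    using sum_diam by (intro add_right_mono) simp
  also have "\<dots> = ennreal \<epsilon>"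
    using \<epsilon> by (simp flip: ennreal_plus)
  finally have sum_R: "(\<Sum>j. ennreal (R j powr t)) \<le> ennreal \<epsilon>" .
  obtain y0 where y0: "y0 \<in> T" using \<open>T \<noteq> {}\<close> by blast
  define Y where "Y j = (if C j \<inter> T \<noteq> {} then (SOME y. y \<in> C j \<inter> T) else y0)" for j
  have Y_in: "Y j \<in> T" for j
    unfolding Y_def using y0 by (auto intro: someI2_ex)
  have "\<exists>j. dist x (Y j) \<le> R j" if x: "x \<in> T" for x
  proof -
    obtain j where j: "x \<in> C j" using x cover by blast
    then have "Y j \<in> C j" unfolding Y_def using x by (auto intro: someI2_ex)
    then have "dist x (Y j) \<le> diameter (C j)"
      using bounded j diameter_bounded_bound by blast
    then show ?thesis by (auto simp: R_def le_max_iff_disj)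
  qed
  with that Y_in R_pos sum_R show thesis by blast
qed

lemma ennreal_term_le_suminf: "(f n :: ennreal) \<le> (\<Sum>n. f n)"
  using sum_le_suminf[of f "{n}"] by simp

definition dirac_sum :: "(nat \<Rightarrow> ennreal) \<Rightarrow> (nat \<Rightarrow> 'a::topological_space) \<Rightarrow> 'a measure" where
  "dirac_sum w Y = distr (density (count_space UNIV) w) borel Y"

lemma sets_dirac_sum [simp, measurable_cong]: "sets (dirac_sum w Y) = sets borel"
  by (simp add: dirac_sum_def)

lemma emeasure_dirac_sum:
  assumes "B \<in> sets borel"
  shows "emeasure (dirac_sum w Y) B = (\<Sum>n. w n * indicator B (Y n))"
proof -
  have "emeasure (dirac_sum w Y) B = emeasure (density (count_space UNIV) w) (Y -` B)"
    unfolding dirac_sum_def using assms by (subst emeasure_distr) auto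
  also have "\<dots> = (\<Sum>n. w n * indicator B (Y n))"
    by (simp add: emeasure_density nn_integral_count_space_nat indicator_def)
  finally show ?thesis .
qed

lemma emeasure_dirac_sum_ge_weight:
  assumes "B \<in> sets borel" "Y n \<in> B"
  shows "w n \<le> emeasure (dirac_sum w Y) B"
  using ennreal_term_le_suminf[of "\<lambda>n. w n * indicator B (Y n)" n] assms
  by (simp add: emeasure_dirac_sum)

lemma emeasure_dirac_sum_eq_0:
  assumes "\<And>n. Y n \<notin> B"
  shows "emeasure (dirac_sum w Y) B = 0"
  using assms by (cases "B \<in> sets borel") (simp_all add: emeasure_dirac_sum emeasure_notin_sets)

lemma finite_radon_dirac_sum:
  fixes Y :: "nat \<Rightarrow> 'a::t2_space"
  assumes "(\<Sum>n. w n) < \<infinity>"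
  shows "finite_radon (dirac_sum w Y)"
  unfolding finite_radon_def
proof (intro conjI ballI antisym)
  show "emeasure (dirac_sum w Y) UNIV < \<infinity>"
    using assms by (simp add: emeasure_dirac_sum)
next
  fix B :: "'a set" assume B: "B \<in> sets borel"
  show "(SUP K\<in>{K. compact K \<and> K \<subseteq> B}. emeasure (dirac_sum w Y) K) \<le> emeasure (dirac_sum w Y) B"
    using B by (auto intro!: SUP_least emeasure_mono borel_closed compact_imp_closed)
  have "(\<Sum>n<N. w n * indicator B (Y n)) \<le> (SUP K\<in>{K. compact K \<and> K \<subseteq> B}. emeasure (dirac_sum w Y) K)"
    for N
  proof -
    define K where "K = Y ` {n. n < N \<and> Y n \<in> B}"
    have "finite K" "K \<subseteq> B" unfolding K_def by auto
    then have K: "compact K" "K \<subseteq> B" "K \<in> sets borel"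
      by (auto intro: finite_imp_compact borel_closed finite_imp_closed)
    have "(\<Sum>n<N. w n * indicator B (Y n)) \<le> (\<Sum>n<N. w n * indicator K (Y n))"
      by (intro sum_mono) (auto simp: K_def indicator_def)
    also have "\<dots> \<le> emeasure (dirac_sum w Y) K"
      using K sum_le_suminf[of "\<lambda>n. w n * indicator K (Y n)" "{..<N}"]
      by (simp add: emeasure_dirac_sum del: sum_mult_indicator)
    also have "\<dots> \<le> (SUP K\<in>{K. compact K \<and> K \<subseteq> B}. emeasure (dirac_sum w Y) K)"
      using K by (intro SUP_upper) auto
    finally show ?thesis .
  qed
  then show "emeasure (dirac_sum w Y) B \<le> (SUP K\<in>{K. compact K \<and> K \<subseteq> B}. emeasure (dirac_sum w Y) K)"
    using B by (simp add: emeasure_dirac_sum suminf_eq_SUP SUP_least)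
qed simp_all

definition double_dirac_sum ::
    "(nat \<Rightarrow> nat \<Rightarrow> ennreal) \<Rightarrow> (nat \<Rightarrow> nat \<Rightarrow> 'a::topological_space) \<Rightarrow> 'a measure" where
  "double_dirac_sum w Y = dirac_sum (case_prod w \<circ> prod_decode) (case_prod Y \<circ> prod_decode)"

lemma sets_double_dirac_sum [simp, measurable_cong]: "sets (double_dirac_sum w Y) = sets borel"
  by (simp add: double_dirac_sum_def)

lemma emeasure_double_dirac_sum_ge_weight:
  assumes "B \<in> sets borel" "Y k j \<in> B"
  shows "w k j \<le> emeasure (double_dirac_sum w Y) B"
  using assms emeasure_dirac_sum_ge_weight[of B "case_prod Y \<circ> prod_decode" "prod_encode (k, j)"
      "case_prod w \<circ> prod_decode"]
  by (simp add: double_dirac_sum_def)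

lemma emeasure_double_dirac_sum_eq_0:
  assumes "\<And>k j. Y k j \<notin> B"
  shows "emeasure (double_dirac_sum w Y) B = 0"
  unfolding double_dirac_sum_def using assms by (intro emeasure_dirac_sum_eq_0) (simp add: split_beta)

lemma finite_radon_double_dirac_sum:
  fixes Y :: "nat \<Rightarrow> nat \<Rightarrow> 'a::t2_space"
  assumes "(\<Sum>k. \<Sum>j. w k j) < \<infinity>"
  shows "finite_radon (double_dirac_sum w Y)"
  unfolding double_dirac_sum_def
proof (rule finite_radon_dirac_sum)
  have "(\<Sum>n. (case_prod w \<circ> prod_decode) n) = (\<Sum>k. \<Sum>j. w k j)"
    using suminf_ennreal_2dimen[of "\<lambda>k. \<Sum>j. w k j" "case_prod w"] by simp
  with assms show "(\<Sum>n. (case_prod w \<circ> prod_decode) n) < \<infinity>"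
    by simp
qed

lemma double_dirac_sum_ball_mass:
  fixes Y :: "nat \<Rightarrow> nat \<Rightarrow> 'a::metric_space"
  assumes t: "0 < t" and R: "\<And>k j. 0 < R k j"
    and sum_R: "\<And>k. (\<Sum>j. ennreal (R k j powr t)) \<le> ennreal ((1/2)^k)"
    and near: "\<And>k. \<exists>j. dist x (Y k j) \<le> R k j" and a: "0 < a"
  shows "\<exists>\<rho>. 0 < \<rho> \<and> \<rho> < a \<and>
    ennreal (\<rho> powr t) \<le> emeasure (double_dirac_sum (\<lambda>k j. ennreal (R k j powr t)) Y) (cball x \<rho>)"
proof -
  obtain k :: nat where k: "(1/2)^k < a powr t"
    using real_arch_pow_inv[of "a powr t" "1/2"] a by auto
  obtain j where j: "dist x (Y k j) \<le> R k j"
    using near by blast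
  have "ennreal (R k j powr t) \<le> ennreal ((1/2)^k)"
    using ennreal_term_le_suminf[of "\<lambda>j. ennreal (R k j powr t)" j] sum_R[of k] by (rule order_trans)
  then have "R k j powr t < a powr t"
    using k by (simp add: ennreal_le_iff)
  then have "R k j < a"
    using R[of k j] t a by (blast intro: powr_less_cancel2)
  moreover have "ennreal (R k j powr t)
      \<le> emeasure (double_dirac_sum (\<lambda>k j. ennreal (R k j powr t)) Y) (cball x (R k j))"
    using j by (intro emeasure_double_dirac_sum_ge_weight) auto
  ultimately show ?thesis
    using R by blast
qed

lemma ennreal_eq_top_if_multiples_le:
  assumes c: "0 < c" and le: "\<And>N :: nat. ennreal (real N * c) \<le> x"
  shows "x = \<infinity>"
proof (rule ccontr)
  assume "x \<noteq> \<infinity>"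
  then obtain y where y: "x = ennreal y" "0 \<le> y"
    using ennreal_cases by (metis infinity_ennreal_def)
  obtain N :: nat where "y / c < real N"
    using reals_Archimedean2 by blast
  then have "y < real N * c"
    using c by (simp add: field_simps)
  with le[of N] y c show False
    by (simp add: ennreal_le_iff)
qed

lemma nn_integral_Ioc_eq_top_if_dyadic_mass:
  fixes f :: "real \<Rightarrow> ennreal"
  assumes f: "f \<in> borel_measurable borel" and c: "0 < c"
    and mass: "\<And>a. 0 < a \<Longrightarrow> a \<le> b \<Longrightarrow>
      \<exists>\<rho>>0. 2*\<rho> \<le> a \<and> ennreal c \<le> (\<integral>\<^sup>+ r\<in>{\<rho><..2*\<rho>}. f r \<partial>lborel)"
    and b: "0 < b"
  shows "(\<integral>\<^sup>+ r\<in>{0<..b}. f r \<partial>lborel) = \<infinity>"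
proof -
  have "ennreal (real N * c) \<le> (\<integral>\<^sup>+ r\<in>{0<..a}. f r \<partial>lborel)" if "0 < a" "a \<le> b" for N a
    using that
  proof (induction N arbitrary: a)
    case 0
    then show ?case by simp
  next
    case (Suc N)
    obtain \<rho> where \<rho>: "0 < \<rho>" "2*\<rho> \<le> a"
      and c_le: "ennreal c \<le> (\<integral>\<^sup>+ r\<in>{\<rho><..2*\<rho>}. f r \<partial>lborel)"
      using mass Suc.prems by blast
    have "ennreal (real (Suc N) * c) = ennreal (real N * c) + ennreal c"
      using c by (simp add: distrib_right ennreal_plus)
    also have "\<dots> \<le> (\<integral>\<^sup>+ r\<in>{0<..\<rho>}. f r \<partial>lborel) + (\<integral>\<^sup>+ r\<in>{\<rho><..2*\<rho>}. f r \<partial>lborel)"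
      using Suc.IH[of \<rho>] \<rho> Suc.prems c_le by (intro add_mono) auto
    also have "\<dots> = (\<integral>\<^sup>+ r. f r * indicator {0<..\<rho>} r + f r * indicator {\<rho><..2*\<rho>} r \<partial>lborel)"
      using f by (intro nn_integral_add[symmetric]) auto
    also have "\<dots> \<le> (\<integral>\<^sup>+ r\<in>{0<..a}. f r \<partial>lborel)"
      using \<rho> by (intro nn_integral_mono) (auto simp: indicator_def)
    finally show ?case .
  qed
  with b c show ?thesis
    by (intro ennreal_eq_top_if_multiples_le[of c]) auto
qed

lemma wolff_integrand_ge:
  fixes n t \<rho> r M :: real
  assumes n: "2 < n" and t: "t \<le> (n - 2)/2" and \<rho>: "0 < \<rho>" "\<rho> \<le> 1" and r: "\<rho> < r" "r \<le> 2*\<rho>"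
    and M: "\<rho> powr t \<le> M"
  shows "1/(4*\<rho>) \<le> (M * r powr (2 - n)) powr (2 / (n - 2))"
proof -
  define p where "p = 2 / (n - 2)"
  have p: "0 < p" "t * p \<le> 1" "(2 - n) * p = -2"
    using n t by (auto simp: p_def field_simps)
  have "1/(4*\<rho>) = \<rho> powr (-1) / 4"
    using \<rho> by (simp add: powr_minus divide_simps)
  also have "\<dots> \<le> \<rho> powr (t*p - 2) / 4"
    using p \<rho> by (intro divide_right_mono powr_mono') auto
  also have "\<dots> = \<rho> powr (t*p) * (2 powr (-2) * \<rho> powr (-2))"
    using \<rho> by (simp add: powr_diff powr_minus divide_simps)
  also have "\<dots> = (\<rho> powr t * (2*\<rho>) powr (2 - n)) powr p"
    using \<rho> p by (simp add: powr_mult powr_powr)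
  also have "\<dots> \<le> (M * r powr (2 - n)) powr p"
  proof -
    have "(2*\<rho>) powr (2 - n) \<le> r powr (2 - n)"
      using n \<rho> r by (intro powr_mono2') auto
    then have "\<rho> powr t * (2*\<rho>) powr (2 - n) \<le> M * r powr (2 - n)"
      using M by (intro mult_mono) (auto intro: order_trans[OF powr_ge_zero])
    then show ?thesis
      using \<rho> p by (intro powr_mono2) auto
  qed
  finally show ?thesis unfolding p_def .
qed

lemma wolff_eq_top_if_ball_mass:
  fixes \<nu> :: "'a::metric_space measure"
  assumes \<nu>: "finite_measure \<nu>" "sets \<nu> = sets borel" and m: "3 \<le> m" and t: "t \<le> (real m - 2)/2"
    and mass: "\<And>a. 0 < a \<Longrightarrow>
      \<exists>\<rho>. 0 < \<rho> \<and> \<rho> < a \<and> ennreal (\<rho> powr t) \<le> emeasure \<nu> (cball x \<rho>)"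
  shows "wolff m \<nu> x = \<infinity>"
proof -
  define M where "M r = measure \<nu> (ball x r)" for r
  have "mono M"
  proof (rule monoI)
    fix r r' :: real assume "r \<le> r'"
    then show "M r \<le> M r'"
      unfolding M_def by (intro finite_measure.finite_measure_mono[OF \<nu>(1)]) (auto simp: \<nu>(2))
  qed
  then have M_measurable: "M \<in> borel_measurable borel"
    by (rule borel_measurable_mono)
  have M_ge: "\<rho> powr t \<le> M r" if "ennreal (\<rho> powr t) \<le> emeasure \<nu> (cball x \<rho>)" "\<rho> < r" for \<rho> r
  proof -
    have "emeasure \<nu> (cball x \<rho>) \<le> emeasure \<nu> (ball x r)"
      using \<nu> that by (intro emeasure_mono) auto
    with that show ?thesis
      using finite_measure.emeasure_eq_measure[OF \<nu>(1)] by (simp add: M_def)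
  qed
  define w where "w r = ennreal ((M r * r powr (2 - real m)) powr (2 / (real m - 2)))" for r
  have "(\<integral>\<^sup>+ r\<in>{0<..1}. w r \<partial>lborel) = \<infinity>"
  proof (rule nn_integral_Ioc_eq_top_if_dyadic_mass[where c="1/4"])
    show "w \<in> borel_measurable borel"
      unfolding w_def using M_measurable by measurable
  next
    fix a :: real assume a: "0 < a" "a \<le> 1"
    obtain \<rho> where \<rho>: "0 < \<rho>" "\<rho> < a/2" and \<rho>_mass: "ennreal (\<rho> powr t) \<le> emeasure \<nu> (cball x \<rho>)"
      using mass[of "a/2"] a by auto
    have "ennreal (1/4) = (\<integral>\<^sup>+ r\<in>{\<rho><..2*\<rho>}. ennreal (1/(4*\<rho>)) \<partial>lborel)"
      using \<rho> by (simp add: nn_integral_cmult_indicator emeasure_lborel_Ioc flip: ennreal_mult)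
    also have "\<dots> \<le> (\<integral>\<^sup>+ r\<in>{\<rho><..2*\<rho>}. w r \<partial>lborel)"
    proof (rule nn_integral_mono)
      fix r
      have "1/(4*\<rho>) \<le> (M r * r powr (2 - real m)) powr (2 / (real m - 2))" if "r \<in> {\<rho><..2*\<rho>}"
        using m t \<rho> a that M_ge[OF \<rho>_mass] by (intro wolff_integrand_ge) auto
      then show "ennreal (1/(4*\<rho>)) * indicator {\<rho><..2*\<rho>} r \<le> w r * indicator {\<rho><..2*\<rho>} r"
        unfolding w_def by (cases "r \<in> {\<rho><..2*\<rho>}") (simp_all add: ennreal_leI)
    qed
    finally show "\<exists>\<rho>>0. 2*\<rho> \<le> a \<and> ennreal (1/4) \<le> (\<integral>\<^sup>+ r\<in>{\<rho><..2*\<rho>}. w r \<partial>lborel)"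
      using \<rho> by auto
  qed simp_all
  then show ?thesis unfolding wolff_def M_def w_def .
qed

lemma finite_radon_imp_finite_measure:
  assumes "finite_radon \<nu>"
  shows "finite_measure \<nu>"
proof (rule finite_measureI)
  have "space \<nu> = UNIV"
    using assms sets_eq_imp_space_eq[of \<nu> borel] by (simp add: finite_radon_def)
  moreover have "emeasure \<nu> UNIV < \<infinity>"
    using assms unfolding finite_radon_def by blast
  ultimately show "emeasure \<nu> (space \<nu>) \<noteq> \<infinity>"
    by simp
qed

lemma exists_finite_radon_wolff_eq_top:
  fixes T :: "'a::metric_space set"
  assumes m: "3 \<le> m" and H: "hausdorff_measure ((real m - 2)/2) T = 0"
  shows "\<exists>\<nu>. finite_radon \<nu> \<and> emeasure \<nu> (UNIV - T) = 0 \<and> (\<forall>x\<in>T. wolff m \<nu> x = \<infinity>)"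
proof (cases "T = {}")
  case True
  have "finite_radon (dirac_sum (\<lambda>_. 0) (\<lambda>_. undefined :: 'a))"
    by (intro finite_radon_dirac_sum) simp
  with True show ?thesis
    by (intro exI[of _ "dirac_sum (\<lambda>_. 0) (\<lambda>_. undefined)"]) (simp add: emeasure_dirac_sum)
next
  case False
  define t where "t = (real m - 2)/2"
  have t: "0 < t" using m by (simp add: t_def)
  have "\<exists>Y R. (\<forall>j. Y j \<in> T) \<and> (\<forall>j. 0 < R j) \<and> (\<Sum>j. ennreal (R j powr t)) \<le> ennreal ((1/2)^k)
      \<and> (\<forall>x\<in>T. \<exists>j. dist x (Y j) \<le> R j)" for k
    by (rule hausdorff_measure_zero_imp_ball_cover[OF H[folded t_def] t False, of "(1/2)^k"]) (blast | simp)+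
  then obtain Y where "\<forall>k. \<exists>R. (\<forall>j. Y k j \<in> T) \<and> (\<forall>j. 0 < R j)
      \<and> (\<Sum>j. ennreal (R j powr t)) \<le> ennreal ((1/2)^k) \<and> (\<forall>x\<in>T. \<exists>j. dist x (Y k j) \<le> R j)"
    by metis
  then obtain R where Y: "\<And>k j. Y k j \<in> T" and R: "\<And>k j. 0 < R k j"
    and sum_R: "\<And>k. (\<Sum>j. ennreal (R k j powr t)) \<le> ennreal ((1/2)^k)"
    and cover: "\<And>k x. x \<in> T \<Longrightarrow> \<exists>j. dist x (Y k j) \<le> R k j"
    by metis
  define \<nu> where "\<nu> = double_dirac_sum (\<lambda>k j. ennreal (R k j powr t)) Y"
  have "(\<Sum>k. \<Sum>j. ennreal (R k j powr t)) \<le> (\<Sum>k. ennreal ((1/2)^k))"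
    using sum_R by (intro suminf_le) auto
  also have "\<dots> = ennreal (\<Sum>k. (1/2)^k)"
    by (rule suminf_ennreal2) (simp_all add: summable_geometric_iff)
  finally have "(\<Sum>k. \<Sum>j. ennreal (R k j powr t)) < \<infinity>"
    unfolding infinity_ennreal_def by (rule order.strict_trans1[OF _ ennreal_less_top])
  then have radon: "finite_radon \<nu>"
    unfolding \<nu>_def by (rule finite_radon_double_dirac_sum)
  have "emeasure \<nu> (UNIV - T) = 0"
    unfolding \<nu>_def using Y by (intro emeasure_double_dirac_sum_eq_0) simp
  moreover have "wolff m \<nu> x = \<infinity>" if "x \<in> T" for x
  proof (rule wolff_eq_top_if_ball_mass)
    show "\<exists>\<rho>. 0 < \<rho> \<and> \<rho> < a \<and> ennreal (\<rho> powr t) \<le> emeasure \<nu> (cball x \<rho>)" if "0 < a" for a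
      unfolding \<nu>_def using double_dirac_sum_ball_mass[OF t R sum_R cover[OF \<open>x \<in> T\<close>] that] .
  qed (use radon m in \<open>simp_all add: finite_radon_imp_finite_measure \<nu>_def t_def\<close>)
  ultimately show ?thesis using radon by blast
qed

theorem lemma2p19:
  fixes \<mu> :: "'a::complete_space measure" and S :: "'a set"
    and A :: "('a,'n::finite) chart set" and g :: "('a,'n) chart \<Rightarrow> real^'n \<Rightarrow> real^'n^'n"
    and m :: nat and o\<^sub>0 :: 'a and i :: nat
  assumes "almost_manifold m \<mu> S A g"
    and "LPI \<mu> S A g"
    and "\<not> bounded (UNIV - S)"
    and "o\<^sub>0 \<in> UNIV - S"
    and "i \<ge> 1"
    and "hausdorff_dim S < ereal ((real m - 2) / 2)"
  shows "\<exists>\<nu>. finite_radon \<nu> \<and>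
           emeasure \<nu> (UNIV - (S \<inter> closure (ball o\<^sub>0 (real i)))) = 0 \<and>
           (\<forall>x\<in>S \<inter> closure (ball o\<^sub>0 (real i)). wolff m \<nu> x = \<infinity>)"
proof -
  have m: "3 \<le> m"
    using assms(1) unfolding almost_manifold_def by blast
  obtain s where s: "0 \<le> s" "hausdorff_measure s S = 0" "ereal s < ereal ((real m - 2)/2)"
    using assms(6) unfolding hausdorff_dim_def Inf_less_iff by blast
  then have "hausdorff_measure ((real m - 2)/2) S = 0"
    using hausdorff_measure_zero_mono_exponent[OF s(2,1), of "(real m - 2)/2"] by simp
  moreover have "hausdorff_measure ((real m - 2)/2) (S \<inter> closure (ball o\<^sub>0 (real i)))
      \<le> hausdorff_measure ((real m - 2)/2) S"
    by (rule hausdorff_measure_mono) blast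
  ultimately have "hausdorff_measure ((real m - 2)/2) (S \<inter> closure (ball o\<^sub>0 (real i))) = 0"
    by simp
  with m show ?thesis
    by (rule exists_finite_radon_wolff_eq_top)
qed

end
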